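(* Let $\mathbb{F}_q$ be a finite field with $4 \mid q-1$, and let $f \in \mathbb{F}_q[x]$ be irreducible of even degree $d$, so that $\mathbb{F}_{q^d} = \mathbb{F}_q[x]/\langle f\rangle$. Then the formal derivative $f'$ (taken modulo $f$) is a quadratic nonresidue in $\mathbb{F}_q[x]/\langle f\rangle$.
   Context: An element $a$ of a finite field $F$ is a quadratic nonresidue if $x^2=a$ has no solution in $F$. *)

theory Defs
  imports "HOL-Computational_Algebra.Computational_Algebra"
begin

definition quad_nonresidue_mod :: "'a::field poly \<Rightarrow> 'a poly \<Rightarrow> bool" where
  "quad_nonresidue_mod f a \<longleftrightarrow> \<not> (\<exists>x. (x ^ 2) mod f = a mod f)"

end

theory Submission
  imports Defs "HOL-Library.Cardinality" "HOL-Number_Theory.Cong"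
begin

(*
  Write q for the order of the field, d for the degree and c for the leading coefficient of f,
  and a for the class of x modulo f. The roots of f modulo f are the conjugates a_i = a^(q^i),
  i < d, which are pairwise distinct, so f'(a) = c * prod_{i<>0} (a - a_i). Its norm
  f'(a)^(1 + q + ... + q^(d-1)) is therefore c^d * prod_{i<j} (a_i - a_j) (a_j - a_i), and
  raising it to the power (q - 1)/2, which is even because 4 divides q - 1, leaves delta^(q-1)
  for the Vandermonde product delta = prod_{i<j} (a_i - a_j). The Frobenius map permutes the
  a_i cyclically, and a d-cycle is odd for even d, so delta^q = -delta. Hence
  f'(a)^((q^d - 1)/2) = -1, and Euler's criterion shows that f'(a) is not a square.
*)

lemma power_card_eq: "(x::'a::{field,finite}) ^ CARD('a) = x"
proof (cases "x = 0")
  case False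
  have "x * (\<Prod>y\<in>UNIV-{0}. x * y) = x * x ^ (CARD('a) - 1) * \<Prod>(UNIV-{0})"
    by (simp add: prod.distrib mult_ac)
  also have "x * x ^ (CARD('a) - 1) = x ^ CARD('a)"
    using finite_UNIV_card_ge_0[where ?'a = 'a] by (simp flip: power_Suc)
  also have "(\<Prod>y\<in>UNIV-{0}. x * y) = (\<Prod>y\<in>UNIV-{0}. y)"
    by (rule prod.reindex_bij_witness[of _ "\<lambda>y. y / x" "\<lambda>y. x * y"]) (use False in auto)
  finally show ?thesis
    by simp
qed (use finite_UNIV_card_ge_0[where ?'a = 'a] in auto)

lemma power_card_minus_one_eq:
  assumes "(x::'a::{field,finite}) \<noteq> 0"
  shows "x ^ (CARD('a) - 1) = 1"
proof -
  have "x * x ^ (CARD('a) - 1) = x * 1"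
    using power_card_eq[of x] finite_UNIV_card_ge_0[where 'a='a] by (simp flip: power_Suc)
  then show ?thesis
    using assms by simp
qed

lemma two_le_card: "2 \<le> CARD('a::{field,finite})"
proof -
  have "card {0::'a, 1} \<le> CARD('a)" by (rule card_mono) auto
  then show ?thesis by simp
qed

text \<open>In a field of order q, the polynomial (1 + t)^q - t^q - 1 has degree less than q but
  vanishes everywhere, so it is zero; this avoids showing that q is a prime power.\<close>
lemma of_nat_card_choose_eq_0:
  assumes "0 < k" "k < CARD('a::{field,finite})"
  shows "(of_nat (CARD('a) choose k) :: 'a) = 0"
proof -
  define P :: "'a poly" where "P = [:1, 1:] ^ CARD('a) - monom 1 (CARD('a)) - 1"
  have coeff_P: "coeff P i = (if 0 < i \<and> i < CARD('a) then of_nat (CARD('a) choose i) else 0)" for i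
    by (cases "i \<le> CARD('a)")
       (auto simp: P_def coeff_linear_poly_power coeff_monom coeff_eq_0 degree_linear_power)
  have "P = 0"
  proof (rule ccontr)
    assume "P \<noteq> 0"
    have "degree P \<le> CARD('a) - 1"
      by (rule degree_le) (auto simp: coeff_P)
    moreover have "{x. poly P x = 0} = UNIV"
      by (auto simp: P_def poly_monom power_card_eq)
    then have "CARD('a) \<le> degree P"
      using card_poly_roots_bound[OF \<open>P \<noteq> 0\<close>] by simp
    ultimately show False
      using two_le_card[where 'a='a] by simp
  qed
  then show ?thesis
    using coeff_P[of k] assms by simp
qed

lemma frobenius_add:
  fixes u v :: "'a::{field,finite} poly"
  shows "(u + v) ^ CARD('a) = u ^ CARD('a) + v ^ CARD('a)"
proof -
  let ?q = "CARD('a)"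
  have "(u + v) ^ ?q = (\<Sum>k\<le>?q. of_nat (?q choose k) * u ^ k * v ^ (?q - k))"
    by (rule binomial_ring)
  also have "\<dots> = (\<Sum>k\<in>{0, ?q}. of_nat (?q choose k) * u ^ k * v ^ (?q - k))"
    by (rule sum.mono_neutral_right)
       (auto simp: of_nat_poly of_nat_card_choose_eq_0 simp del: of_nat_eq_0_iff)
  also have "\<dots> = u ^ ?q + v ^ ?q"
    using two_le_card[where 'a='a] by simp
  finally show ?thesis .
qed

lemma frobenius_power_add:
  fixes u v :: "'a::{field,finite} poly"
  shows "(u + v) ^ (CARD('a) ^ k) = u ^ (CARD('a) ^ k) + v ^ (CARD('a) ^ k)"
  by (induction k arbitrary: u v) (simp_all add: power_mult frobenius_add)

lemma frobenius_power_diff: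
  fixes u v :: "'a::{field,finite} poly"
  shows "(u - v) ^ (CARD('a) ^ k) = u ^ (CARD('a) ^ k) - v ^ (CARD('a) ^ k)"
  using frobenius_power_add[of "u - v" v k] by (simp add: algebra_simps)

lemma frobenius_power_const: "[:a::'a::{field,finite}:] ^ (CARD('a) ^ k) = [:a:]"
  by (induction k) (simp_all add: poly_const_pow power_mult power_card_eq)

lemma frobenius_power_pcompose:
  fixes g y :: "'a::{field,finite} poly"
  shows "pcompose g y ^ (CARD('a) ^ k) = pcompose g (y ^ (CARD('a) ^ k))"
  by (induction g)
     (simp_all add: pcompose_pCons frobenius_power_add frobenius_power_const power_mult_distrib)

lemma of_nat_card_eq_0: "(of_nat CARD('a) :: 'a::{ring_1,finite}) = 0"
proof -
  have "(\<Sum>x\<in>UNIV. x + 1) = (\<Sum>x\<in>UNIV. x :: 'a)"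
    by (rule sum.reindex_bij_witness[of _ "\<lambda>x. x - 1" "\<lambda>x. x + 1"]) auto
  then show ?thesis
    by (simp add: sum.distrib)
qed

lemma two_neq_zero_if_odd_card:
  assumes "odd CARD('a::{field,finite})"
  shows "(2::'a) \<noteq> 0"
proof
  assume "(2::'a) = 0"
  obtain m where "CARD('a) = 2 * m + 1"
    using assms oddE by blast
  then have "(of_nat CARD('a) :: 'a) = 1"
    using \<open>(2::'a) = 0\<close> by simp
  then show False
    using of_nat_card_eq_0[where 'a='a] by simp
qed

lemma card_degree_le:
  "card {g :: 'a::{zero,finite} poly. degree g \<le> n} = CARD('a) ^ Suc n"
proof (induction n)
  case 0
  have "{g :: 'a poly. degree g \<le> 0} = range (\<lambda>a. [:a:])"
    by (auto elim: degree_eq_zeroE)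
  then show ?case
    by (simp add: card_image inj_on_def)
next
  case (Suc n)
  have "{g :: 'a poly. degree g \<le> Suc n} = (\<lambda>(a, g). pCons a g) ` (UNIV \<times> {g. degree g \<le> n})"
  proof (intro set_eqI iffI)
    fix g :: "'a poly"
    assume "g \<in> {g. degree g \<le> Suc n}"
    moreover obtain a h where "g = pCons a h"
      by (cases g)
    ultimately show "g \<in> (\<lambda>(a, g). pCons a g) ` (UNIV \<times> {g. degree g \<le> n})"
      by (auto split: if_splits)
  qed auto
  moreover have "inj (\<lambda>(a, g :: 'a poly). pCons a g)"
    by (auto simp: inj_def)
  ultimately show ?case
    using Suc by (simp add: card_image inj_on_subset card_cartesian_product)
qed

lemma dvd_poly_diff:
  fixes P :: "'a::comm_ring_1 poly"
  shows "x - y dvd poly P x - poly P y"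
proof (induction P)
  case (pCons a P)
  have "poly (pCons a P) x - poly (pCons a P) y = x * (poly P x - poly P y) + (x - y) * poly P y"
    by (simp add: algebra_simps)
  then show ?case
    using pCons by (simp add: dvd_add)
qed simp

lemma prime_elem_dvd_prod_iff:
  assumes "prime_elem p" "finite A"
  shows "p dvd (\<Prod>x\<in>A. g x) \<longleftrightarrow> (\<exists>x\<in>A. p dvd g x)"
  using assms(2)
proof (induction A rule: finite_induct)
  case empty
  then show ?case using assms(1) prime_elem_not_unit by auto
next
  case (insert x A)
  then show ?case using assms(1) by (simp add: prime_elem_dvd_mult_iff)
qed

lemma factor_roots_mod_prime:
  fixes P :: "'b::idom poly" and a :: "nat \<Rightarrow> 'b"
  assumes p: "prime_elem p"
    and roots: "\<And>i. i < n \<Longrightarrow> p dvd poly P (a i)"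
    and distinct: "\<And>i j. i < n \<Longrightarrow> j < n \<Longrightarrow> i \<noteq> j \<Longrightarrow> \<not> p dvd a i - a j"
  shows "\<exists>Q E. P = (\<Prod>i<n. [:- a i, 1:]) * Q + smult p E \<and> degree Q = degree P - n"
  using roots distinct
proof (induction n)
  case 0
  show ?case
    by (intro exI[of _ P] exI[of _ 0]) simp
next
  case (Suc n)
  define L where "L = (\<Prod>i<n. [:- a i, 1:])"
  obtain Q E where QE: "P = L * Q + smult p E" "degree Q = degree P - n"
    using Suc by (auto simp: L_def)
  have "p dvd poly L (a n) * poly Q (a n)"
    using Suc.prems(1)[of n] by (simp add: QE(1) dvd_add_left_iff)
  moreover have "\<not> p dvd poly L (a n)"
    using Suc.prems(2) p by (auto simp: L_def poly_prod prime_elem_dvd_prod_iff)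
  ultimately obtain t where t: "poly Q (a n) = p * t"
    using p by (auto simp: prime_elem_dvd_mult_iff)
  define Q' where "Q' = synthetic_div Q (a n)"
  have "Q = [:- a n, 1:] * Q' + smult p [:t:]"
    using synthetic_div_correct'[of "a n" Q] t by (simp add: Q'_def)
  then have "P = (L * [:- a n, 1:]) * Q' + smult p (L * [:t:] + E)"
    unfolding QE(1)
    by (simp only: distrib_left mult.assoc mult_smult_right smult_add_right add.assoc)
  moreover have "degree Q' = degree P - Suc n"
    using QE(2) by (simp add: Q'_def degree_synthetic_div)
  ultimately show ?case
    by (auto simp: L_def)
qed

lemma roots_mod_prime_le_degree:
  fixes P :: "'b::idom poly" and a :: "nat \<Rightarrow> 'b"
  assumes p: "prime_elem p" and lead: "\<not> p dvd lead_coeff P"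
    and roots: "\<And>i. i < n \<Longrightarrow> p dvd poly P (a i)"
    and distinct: "\<And>i j. i < n \<Longrightarrow> j < n \<Longrightarrow> i \<noteq> j \<Longrightarrow> \<not> p dvd a i - a j"
  shows "n \<le> degree P"
proof (rule ccontr)
  assume "\<not> n \<le> degree P"
  define L where "L = (\<Prod>i<n. [:- a i, 1:])"
  obtain Q E where QE: "P = L * Q + smult p E" "degree Q = degree P - n"
    using factor_roots_mod_prime[of p n P a, OF p roots distinct] unfolding L_def by blast
  have L: "lead_coeff L = 1" "degree L = n"
    unfolding L_def by (subst lead_coeff_prod) (simp_all add: degree_prod_eq_sum_degree)
  obtain c where c: "Q = [:c:]"
    using QE(2) \<open>\<not> n \<le> degree P\<close> by (metis degree_0_id diff_is_0_eq nat_le_linear)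
  have coeff_P: "coeff P k = coeff L k * c + p * coeff E k" for k
    by (simp add: QE(1) c)
  have "c = - (p * coeff E n)"
    using coeff_P[of n] L \<open>\<not> n \<le> degree P\<close> by (simp add: coeff_eq_0 eq_neg_iff_add_eq_0)
  then have "p dvd c"
    by simp
  then show False
    using lead coeff_P[of "degree P"] by simp
qed

lemma pderiv_map_poly_const:
  "pderiv (map_poly (\<lambda>a. [:a:]) g) = map_poly (\<lambda>a. [:a:]) (pderiv (g :: 'a::idom poly))"
  by (rule poly_eqI) (simp add: coeff_pderiv coeff_map_poly of_nat_poly)

lemma poly_pderiv_prod_linear:
  fixes a :: "nat \<Rightarrow> 'a::idom"
  assumes "0 < n"
  shows "poly (pderiv (\<Prod>i<n. [:- a i, 1:])) (a 0) = (\<Prod>i\<in>{1..<n}. a 0 - a i)"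
proof -
  have "poly (pderiv (\<Prod>i<n. [:- a i, 1:])) (a 0) = (\<Sum>k<n. \<Prod>i\<in>{..<n}-{k}. a 0 - a i)"
    by (simp add: pderiv_prod poly_sum poly_prod pderiv_pCons)
  also have "\<dots> = (\<Sum>k\<in>{0}. \<Prod>i\<in>{..<n}-{k}. a 0 - a i)"
    by (rule sum.mono_neutral_right) (use assms in \<open>auto intro!: prod_zero bexI[of _ 0]\<close>)
  also have "\<dots> = (\<Prod>i\<in>{1..<n}. a 0 - a i)"
    by simp (intro prod.cong; auto)
  finally show ?thesis .
qed

definition vandermonde_prod :: "(nat \<Rightarrow> 'a::comm_ring_1) \<Rightarrow> nat \<Rightarrow> 'a" where
  "vandermonde_prod A d = (\<Prod>j<d. \<Prod>i<j. A i - A j)"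

text \<open>Shifting the indices is a d-cycle, an odd permutation when d is even.\<close>
lemma vandermonde_prod_shift:
  fixes A :: "nat \<Rightarrow> 'a::comm_ring_1"
  assumes "A d = A 0" "even d" "0 < d"
  shows "vandermonde_prod (\<lambda>i. A (Suc i)) d = - vandermonde_prod A d"
proof -
  obtain n where d: "d = Suc n" and "odd n"
    using assms(2,3) by (cases d) auto
  have "(\<Prod>i<n. A (Suc i) - A 0) = (\<Prod>i<n. (- 1) * (A 0 - A (Suc i)))"
    by (intro prod.cong) auto
  also have "\<dots> = - (\<Prod>i<n. A 0 - A (Suc i))"
    using \<open>odd n\<close> by (subst prod.distrib) simp
  finally have last: "(\<Prod>i<n. A (Suc i) - A (Suc n)) = - (\<Prod>i<n. A 0 - A (Suc i))"
    using assms(1) d by simp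
  have "vandermonde_prod A d = (\<Prod>j<n. A 0 - A (Suc j)) * (\<Prod>j<n. \<Prod>i<j. A (Suc i) - A (Suc j))"
    unfolding vandermonde_prod_def d prod.lessThan_Suc_shift
    by (simp add: prod.lessThan_Suc_shift prod.distrib)
  moreover have "vandermonde_prod (\<lambda>i. A (Suc i)) d =
      (\<Prod>j<n. \<Prod>i<j. A (Suc i) - A (Suc j)) * (\<Prod>i<n. A (Suc i) - A (Suc n))"
    unfolding vandermonde_prod_def d by simp
  ultimately show ?thesis
    unfolding last by (simp add: mult.commute)
qed

lemma prod_offdiag_eq_prod_pairs:
  fixes g :: "nat \<Rightarrow> nat \<Rightarrow> 'b::comm_monoid_mult"
  shows "(\<Prod>k<d. \<Prod>j\<in>{..<d}-{k}. g k j) = (\<Prod>j<d. \<Prod>i<j. g i j * g j i)"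
proof -
  have split: "{..<d} - {k} = {..<k} \<union> {k<..<d}" if "k < d" for k
    using that by auto
  have "(\<Prod>k<d. \<Prod>j\<in>{..<d}-{k}. g k j) = (\<Prod>k<d. (\<Prod>j<k. g k j) * (\<Prod>j\<in>{k<..<d}. g k j))"
    by (intro prod.cong refl, subst split) (auto intro: prod.union_disjoint)
  also have "\<dots> = (\<Prod>k<d. \<Prod>j<k. g k j) * (\<Prod>k\<in>{..<d}. \<Prod>j\<in>{j\<in>{..<d}. k < j}. g k j)"
    by (simp add: prod.distrib greaterThanLessThan_def lessThan_def Int_def conj_commute)
  also have "(\<Prod>k\<in>{..<d}. \<Prod>j\<in>{j\<in>{..<d}. k < j}. g k j) = (\<Prod>j\<in>{..<d}. \<Prod>k\<in>{k\<in>{..<d}. k < j}. g k j)"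
    by (rule prod.swap_restrict) auto
  also have "\<dots> = (\<Prod>j<d. \<Prod>k<j. g k j)"
    by (intro prod.cong refl) auto
  finally show ?thesis
    by (simp add: prod.distrib mult.commute)
qed

lemma prod_rotate_periodic:
  fixes h :: "nat \<Rightarrow> 'b::comm_monoid_mult"
  assumes periodic: "\<And>i. h (i mod d) = h i" and "k < d"
  shows "(\<Prod>i\<in>{1..<d}. h (i + k)) = (\<Prod>j\<in>{..<d}-{k}. h j)"
proof (rule prod.reindex_bij_witness[of _ "\<lambda>j. (j + d - k) mod d" "\<lambda>i. (i + k) mod d"])
  fix i
  assume i: "i \<in> {1..<d}"
  show "(i + k) mod d \<in> {..<d} - {k}" "((i + k) mod d + d - k) mod d = i"
    using i \<open>k < d\<close> by (cases "i + k < d"; auto simp: mod_if)+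
  show "h ((i + k) mod d) = h (i + k)"
    by (rule periodic)
next
  fix j
  assume j: "j \<in> {..<d} - {k}"
  show "(j + d - k) mod d \<in> {1..<d}" "((j + d - k) mod d + k) mod d = j"
    using j \<open>k < d\<close> by (cases "j < k"; auto simp: mod_if)+
qed

definition conjugate_x :: "nat \<Rightarrow> 'a::{field,finite} poly" where
  "conjugate_x j = [:0, 1:] ^ (CARD('a) ^ j)"

lemma conjugate_x_0: "conjugate_x 0 = [:0, 1:]"
  by (simp add: conjugate_x_def)

lemma conjugate_x_power:
  "(conjugate_x i :: 'a::{field,finite} poly) ^ (CARD('a) ^ k) = conjugate_x (i + k)"
  by (simp add: conjugate_x_def power_add flip: power_mult)

lemma pcompose_conjugate_x:
  fixes g :: "'a::{field,finite} poly"
  shows "pcompose g (conjugate_x k) = g ^ (CARD('a) ^ k)"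
  using frobenius_power_pcompose[of g "[:0, 1:]" k] by (simp add: conjugate_x_def)

locale irreducible_poly =
  fixes f :: "'a::{field,finite} poly"
  assumes irreducible_f: "irreducible f"
begin

lemma prime_elem_f: "prime_elem f"
  using irreducible_f by (rule field_poly_irreducible_imp_prime)

lemma degree_f_pos: "0 < degree f"
  using irreducible_f by (metis irreducible_def is_unit_iff_degree neq0_conv)

lemma dvd_f_imp_zero: "degree g < degree f \<Longrightarrow> f dvd g \<Longrightarrow> g = 0"
  by (metis dvd_imp_degree_le not_le)

definition residues :: "'a poly set" where
  "residues = {g. degree g < degree f}"

lemma card_residues: "card residues = CARD('a) ^ degree f"
proof -
  have "residues = {g. degree g \<le> degree f - 1}"
    using degree_f_pos by (auto simp: residues_def)
  then show ?thesis
    using card_degree_le[of "degree f - 1", where 'a='a] degree_f_pos by simp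
qed

lemma residues_eqI: "g \<in> residues \<Longrightarrow> h \<in> residues \<Longrightarrow> f dvd g - h \<Longrightarrow> g = h"
  using dvd_f_imp_zero[of "g - h"] by (simp add: residues_def degree_diff_less)

lemma finite_residues: "finite residues"
  using card_residues finite_UNIV_card_ge_0[where 'a='a] by (intro card_ge_0_finite) simp

lemma fermat_cong_one:
  assumes "\<not> f dvd y"
  shows "[y ^ (CARD('a) ^ degree f - 1) = 1] (mod f)"
proof -
  define U where "U = residues - {0}"
  define h where "h r = (y * r) mod f" for r
  have finite_U: "finite U"
    using finite_residues by (simp add: U_def)
  have U_not_dvd: "\<not> f dvd r" if "r \<in> U" for r
    using that dvd_f_imp_zero by (auto simp: U_def residues_def)
  have "h ` U \<subseteq> U"
    using assms U_not_dvd prime_elem_f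
    by (auto simp: U_def residues_def h_def degree_mod_less' prime_elem_dvd_mult_iff
        mod_eq_0_iff_dvd)
  moreover have "inj_on h U"
  proof (rule inj_onI)
    fix r r'
    assume "r \<in> U" "r' \<in> U" "h r = h r'"
    then have "f dvd y * (r - r')"
      by (simp add: h_def mod_eq_dvd_iff algebra_simps)
    then have "f dvd r - r'"
      using assms prime_elem_f by (simp add: prime_elem_dvd_mult_iff)
    then show "r = r'"
      using \<open>r \<in> U\<close> \<open>r' \<in> U\<close> residues_eqI by (simp add: U_def)
  qed
  ultimately have "h ` U = U"
    using finite_U endo_inj_surj by blast
  then have "\<Prod>U = prod h U"
    using prod.reindex[OF \<open>inj_on h U\<close>, of id] by simp
  also have "[prod h U = (\<Prod>r\<in>U. y * r)] (mod f)"
    by (rule cong_prod) (simp add: h_def)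
  also have "(\<Prod>r\<in>U. y * r) = y ^ card U * \<Prod>U"
    by (simp add: prod.distrib)
  finally have "f dvd (y ^ card U - 1) * \<Prod>U"
    by (simp add: cong_iff_dvd_diff algebra_simps dvd_diff_commute)
  moreover have "\<not> f dvd \<Prod>U"
    using U_not_dvd prime_elem_f finite_U by (simp add: prime_elem_dvd_prod_iff)
  moreover have "card U = CARD('a) ^ degree f - 1"
    using degree_f_pos finite_residues card_residues by (simp add: U_def residues_def)
  ultimately show ?thesis
    using prime_elem_f by (simp add: prime_elem_dvd_mult_iff cong_iff_dvd_diff)
qed

lemma fermat_cong: "[y ^ (CARD('a) ^ degree f) = y] (mod f)"
proof (cases "f dvd y")
  case True
  have "y dvd y ^ (CARD('a) ^ degree f)"
    using finite_UNIV_card_ge_0[where 'a='a] by simp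
  then show ?thesis
    using True by (simp add: cong_iff_dvd_diff dvd_trans)
next
  case False
  have "y ^ (CARD('a) ^ degree f) = y * y ^ (CARD('a) ^ degree f - 1)"
    by (simp flip: power_Suc)
  also have "[\<dots> = y * 1] (mod f)"
    using fermat_cong_one[OF False] by (rule cong_scalar_left)
  finally show ?thesis
    by simp
qed

lemma euler_nonresidue:
  assumes "odd CARD('a)" and "[g ^ ((CARD('a) ^ degree f - 1) div 2) = -1] (mod f)"
  shows "\<not> (\<exists>y. [y ^ 2 = g] (mod f))"
proof
  let ?n = "CARD('a) ^ degree f - 1"
  assume "\<exists>y. [y ^ 2 = g] (mod f)"
  then obtain y where "[y ^ 2 = g] (mod f)" ..
  have "y ^ ?n = (y ^ 2) ^ (?n div 2)"
    using assms(1) by (simp flip: power_mult)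
  also have "[\<dots> = g ^ (?n div 2)] (mod f)"
    using \<open>[y ^ 2 = g] (mod f)\<close> by (rule cong_pow)
  also have "[g ^ (?n div 2) = -1] (mod f)"
    by (fact assms(2))
  finally have power_minus_one: "[y ^ ?n = -1] (mod f)" .
  have "\<not> f dvd 1"
    using prime_elem_f prime_elem_not_unit by blast
  show False
  proof (cases "f dvd y")
    case True
    have "0 < ?n"
      using two_le_card[where 'a='a] degree_f_pos one_less_power[of "CARD('a)" "degree f"]
      by linarith
    then have "f dvd y ^ ?n"
      using True by (simp add: dvd_power_le dvd_trans)
    then show False
      using power_minus_one \<open>\<not> f dvd 1\<close> by (simp add: cong_iff_dvd_diff dvd_add_right_iff)
  next
    case False
    have "[1 = -1] (mod f)"
      using fermat_cong_one[OF False] power_minus_one by (metis cong_sym cong_trans)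
    then have "f dvd [:2:]"
      by (simp add: cong_iff_dvd_diff numeral_poly)
    moreover have "is_unit [:2::'a:]"
      using two_neq_zero_if_odd_card[OF assms(1)]
      by (simp add: is_unit_const_poly_iff dvd_field_iff)
    ultimately show False
      using \<open>\<not> f dvd 1\<close> dvd_trans by blast
  qed
qed

lemma conjugate_x_period: "[conjugate_x (k + degree f) = conjugate_x k] (mod f)"
proof -
  have "[conjugate_x (degree f) = conjugate_x 0] (mod f)"
    using fermat_cong[of "[:0, 1:]"] by (simp add: conjugate_x_def)
  then have "[conjugate_x (degree f) ^ (CARD('a) ^ k) = conjugate_x 0 ^ (CARD('a) ^ k)] (mod f)"
    by (rule cong_pow)
  then show ?thesis
    by (simp add: conjugate_x_power add.commute)
qed

lemma conjugate_x_mod: "[conjugate_x i = conjugate_x (i mod degree f)] (mod f)"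
proof -
  have "[conjugate_x (k + degree f * t) = conjugate_x k] (mod f)" for k t
  proof (induction t)
    case (Suc t)
    have "[conjugate_x (k + degree f * Suc t) = conjugate_x (k + degree f * t)] (mod f)"
      using conjugate_x_period[of "k + degree f * t"] by (simp add: algebra_simps)
    then show ?case
      using Suc cong_trans by blast
  qed simp
  from this[of "i mod degree f" "i div degree f"] show ?thesis
    by simp
qed

lemma conjugate_x_root: "f dvd poly (map_poly (\<lambda>a. [:a:]) f) (conjugate_x j)"
  using finite_UNIV_card_ge_0[where 'a='a] by (simp add: pcompose_conjugate_x flip: pcompose_altdef)

lemma power_card_cong_self_if_conjugate_x_cong_x:
  assumes "[conjugate_x m = [:0, 1:]] (mod f)"
  shows "[g ^ (CARD('a) ^ m) = g] (mod f)"
proof -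
  have "[pcompose g (conjugate_x m) = pcompose g [:0, 1:]] (mod f)"
    using assms dvd_poly_diff[of "conjugate_x m" "[:0, 1:]" "map_poly (\<lambda>a. [:a:]) g"]
    by (auto simp: cong_iff_dvd_diff pcompose_altdef intro: dvd_trans)
  then show ?thesis
    by (simp add: pcompose_conjugate_x)
qed

text \<open>Otherwise the q^d residues would all be roots of Y^(q^m) - Y modulo f.\<close>
lemma degree_le_if_conjugate_x_cong_x:
  assumes "[conjugate_x m = [:0, 1:]] (mod f)" "0 < m"
  shows "degree f \<le> m"
proof -
  let ?Q = "CARD('a) ^ m"
  define P :: "'a poly poly" where "P = monom 1 ?Q - [:0, 1:]"
  have "CARD('a) ^ 1 \<le> ?Q"
    using assms(2) two_le_card[where 'a='a] by (intro power_increasing) auto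
  then have "degree P = ?Q"
    using two_le_card[where 'a='a]
    unfolding P_def diff_conv_add_uminus
    by (subst degree_add_eq_left) (simp_all add: degree_monom_eq)
  then have "lead_coeff P = 1"
    using \<open>CARD('a) ^ 1 \<le> ?Q\<close> two_le_card[where 'a='a] assms(2)
    by (simp add: P_def coeff_pCons split: nat.split)
  obtain a where a: "bij_betw a {..<card residues} residues"
    using ex_bij_betw_nat_finite[OF finite_residues] by (auto simp: atLeast0LessThan)
  have "card residues \<le> degree P"
  proof (rule roots_mod_prime_le_degree[OF prime_elem_f])
    show "\<not> f dvd lead_coeff P"
      using prime_elem_f \<open>lead_coeff P = 1\<close> by (simp add: prime_elem_not_unit)
    show "f dvd poly P (a i)" for i
      using power_card_cong_self_if_conjugate_x_cong_x[OF assms(1)]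
      by (simp add: P_def poly_monom cong_iff_dvd_diff)
    show "\<not> f dvd a i - a j" if "i < card residues" "j < card residues" "i \<noteq> j" for i j
    proof
      assume "f dvd a i - a j"
      moreover have "a i \<in> residues" "a j \<in> residues"
        using a that by (auto dest: bij_betw_apply)
      ultimately have "a i = a j"
        by (rule residues_eqI[rotated 2])
      then show False
        using a that by (auto simp: bij_betw_def inj_on_def)
    qed
  qed
  then have "CARD('a) ^ degree f \<le> CARD('a) ^ m"
    by (simp add: card_residues \<open>degree P = ?Q\<close>)
  then show ?thesis
    using two_le_card[where 'a='a] by simp
qed

lemma conjugate_x_cong_iff:
  assumes "i < degree f" "j < degree f"
  shows "[conjugate_x i = conjugate_x j] (mod f) \<longleftrightarrow> i = j"
proof -
  have contra: False if "i < j" "j < degree f" "[conjugate_x i = conjugate_x j] (mod f)" for i j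
  proof -
    have "[conjugate_x i ^ (CARD('a) ^ (degree f - i)) =
        conjugate_x j ^ (CARD('a) ^ (degree f - i))] (mod f)"
      using that(3) by (rule cong_pow)
    then have "[conjugate_x (0 + degree f) = conjugate_x (j - i + degree f)] (mod f)"
      using that by (simp add: conjugate_x_power)
    then have "[conjugate_x (j - i) = [:0, 1:]] (mod f)"
      using conjugate_x_period[of 0] conjugate_x_period[of "j - i"]
      by (metis cong_sym cong_trans conjugate_x_0)
    then show False
      using degree_le_if_conjugate_x_cong_x[of "j - i"] that by simp
  qed
  show ?thesis
    using assms contra[of i j] contra[of j i]
    by (cases i j rule: linorder_cases) (auto simp: cong_sym_eq)
qed

lemma pderiv_cong_prod_conjugates:
  "[pderiv f = [:lead_coeff f:] * (\<Prod>i\<in>{1..<degree f}. [:0, 1:] - conjugate_x i)] (mod f)"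
proof -
  define d where "d = degree f"
  \<comment> \<open>f as a polynomial over F[x], whose roots modulo f are the conjugates of x\<close>
  define F :: "'a poly poly" where "F = map_poly (\<lambda>a. [:a:]) f"
  define L :: "'a poly poly" where "L = (\<Prod>i<d. [:- conjugate_x i, 1:])"
  have "degree F = d"
    by (simp add: F_def d_def degree_map_poly)
  obtain Q E where QE: "F = L * Q + smult f E" "degree Q = degree F - d"
    using factor_roots_mod_prime[of f d F conjugate_x, OF prime_elem_f]
      conjugate_x_root conjugate_x_cong_iff
    unfolding F_def L_def d_def cong_iff_dvd_diff by blast
  obtain c where "Q = [:c:]"
    using QE(2) \<open>degree F = d\<close> by (auto elim: degree_eq_zeroE)
  then have F: "F = smult c L + smult f E"
    by (simp add: QE(1))
  have "degree L = d" "lead_coeff L = 1"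
    unfolding L_def by (simp add: degree_prod_eq_sum_degree, subst lead_coeff_prod, simp)
  then have "[:lead_coeff f:] = c + f * coeff E d"
    using arg_cong[OF F, of "\<lambda>P. coeff P d"] by (simp add: F_def d_def coeff_map_poly)
  then have lead: "[c = [:lead_coeff f:]] (mod f)"
    by (simp add: cong_iff_dvd_diff)
  have "pderiv f = poly (pderiv F) [:0, 1:]"
    by (simp add: F_def pderiv_map_poly_const flip: pcompose_altdef)
  also have "\<dots> = c * poly (pderiv L) (conjugate_x 0) + f * poly (pderiv E) [:0, 1:]"
    by (simp add: F pderiv_add pderiv_smult conjugate_x_0)
  also have "poly (pderiv L) (conjugate_x 0) = (\<Prod>i\<in>{1..<d}. [:0, 1:] - conjugate_x i)"
    using poly_pderiv_prod_linear[of d conjugate_x] degree_f_pos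
    by (simp add: L_def d_def conjugate_x_0)
  finally have "[pderiv f = c * (\<Prod>i\<in>{1..<d}. [:0, 1:] - conjugate_x i)] (mod f)"
    by (simp add: cong_iff_dvd_diff)
  also have "[c * (\<Prod>i\<in>{1..<d}. [:0, 1:] - conjugate_x i) =
      [:lead_coeff f:] * (\<Prod>i\<in>{1..<d}. [:0, 1:] - conjugate_x i)] (mod f)"
    using lead by (rule cong_mult) simp
  finally show ?thesis
    by (simp add: d_def)
qed

abbreviation conj_mod :: "nat \<Rightarrow> 'a poly" where
  "conj_mod i \<equiv> conjugate_x (i mod degree f)"

lemma pderiv_power_cong:
  "[pderiv f ^ (CARD('a) ^ k) =
    [:lead_coeff f:] * (\<Prod>i\<in>{1..<degree f}. conj_mod k - conj_mod (i + k))] (mod f)"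
proof -
  let ?q = "CARD('a) ^ k"
  have "[pderiv f ^ ?q =
      ([:lead_coeff f:] * (\<Prod>i\<in>{1..<degree f}. [:0, 1:] - conjugate_x i)) ^ ?q] (mod f)"
    using pderiv_cong_prod_conjugates by (rule cong_pow)
  also have "([:lead_coeff f:] * (\<Prod>i\<in>{1..<degree f}. [:0, 1:] - conjugate_x i)) ^ ?q =
      [:lead_coeff f:] * (\<Prod>i\<in>{1..<degree f}. conjugate_x k - conjugate_x (i + k))"
  proof -
    have "([:0, 1:] - conjugate_x i :: 'a poly) ^ ?q = conjugate_x k - conjugate_x (i + k)" for i
      by (simp add: frobenius_power_diff conjugate_x_power add.commute flip: conjugate_x_0)
    then show ?thesis
      by (simp only: power_mult_distrib prod_power_distrib frobenius_power_const)
  qed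
  also have "[\<dots> = [:lead_coeff f:] * (\<Prod>i\<in>{1..<degree f}. conj_mod k - conj_mod (i + k))] (mod f)"
    by (intro cong_mult cong_refl cong_prod cong_diff conjugate_x_mod)
  finally show ?thesis .
qed

lemma norm_pderiv_cong:
  "[pderiv f ^ (\<Sum>k<degree f. CARD('a) ^ k) = [:lead_coeff f:] ^ degree f *
    (\<Prod>j<degree f. \<Prod>i<j. (conj_mod i - conj_mod j) * (conj_mod j - conj_mod i))] (mod f)"
proof -
  let ?d = "degree f"
  have "pderiv f ^ (\<Sum>k<?d. CARD('a) ^ k) = (\<Prod>k<?d. pderiv f ^ (CARD('a) ^ k))"
    by (rule power_sum)
  also have "[\<dots> = (\<Prod>k<?d. [:lead_coeff f:] * (\<Prod>i\<in>{1..<?d}. conj_mod k - conj_mod (i + k)))] (mod f)"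
    by (intro cong_prod pderiv_power_cong)
  also have "(\<Prod>k<?d. [:lead_coeff f:] * (\<Prod>i\<in>{1..<?d}. conj_mod k - conj_mod (i + k))) =
      [:lead_coeff f:] ^ ?d * (\<Prod>k<?d. \<Prod>i\<in>{1..<?d}. conj_mod k - conj_mod (i + k))"
    by (simp only: prod.distrib prod_constant card_lessThan)
  also have "(\<Prod>k<?d. \<Prod>i\<in>{1..<?d}. conj_mod k - conj_mod (i + k)) =
      (\<Prod>k<?d. \<Prod>j\<in>{..<?d}-{k}. conj_mod k - conj_mod j)"
    by (intro prod.cong refl prod_rotate_periodic) auto
  also have "\<dots> = (\<Prod>j<?d. \<Prod>i<j. (conj_mod i - conj_mod j) * (conj_mod j - conj_mod i))"
    by (rule prod_offdiag_eq_prod_pairs)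
  finally show ?thesis .
qed

lemma vandermonde_conj_power_cong:
  assumes "even (degree f)"
  shows "[vandermonde_prod conj_mod (degree f) ^ (CARD('a) - 1) = -1] (mod f)"
proof -
  let ?d = "degree f" and ?\<delta> = "vandermonde_prod conj_mod (degree f)"
  have "?\<delta> ^ CARD('a) = vandermonde_prod (\<lambda>i. conj_mod i ^ CARD('a)) ?d"
    using frobenius_power_diff[where k=1 and 'a='a]
    by (simp add: vandermonde_prod_def prod_power_distrib)
  also have "[\<dots> = vandermonde_prod (\<lambda>i. conj_mod (Suc i)) ?d] (mod f)"
  proof -
    have step: "[conj_mod i ^ CARD('a) = conj_mod (Suc i)] (mod f)" for i
      using conjugate_x_power[of "i mod ?d" 1, where 'a='a] conjugate_x_mod[of "Suc (i mod ?d)"]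
      by (simp add: mod_Suc_eq)
    show ?thesis
      unfolding vandermonde_prod_def by (intro cong_prod cong_diff step)
  qed
  also have "vandermonde_prod (\<lambda>i. conj_mod (Suc i)) ?d = - ?\<delta>"
    using assms degree_f_pos by (intro vandermonde_prod_shift) auto
  finally have "f dvd ?\<delta> * (?\<delta> ^ (CARD('a) - 1) + 1)"
    using finite_UNIV_card_ge_0[where 'a='a]
    by (simp add: cong_iff_dvd_diff algebra_simps flip: power_Suc)
  moreover have "\<not> f dvd ?\<delta>"
    using conjugate_x_cong_iff prime_elem_f
    by (auto simp: vandermonde_prod_def prime_elem_dvd_prod_iff cong_iff_dvd_diff)
  ultimately show ?thesis
    using prime_elem_f by (simp add: prime_elem_dvd_mult_iff cong_iff_dvd_diff)
qed

lemma pderiv_power_half_cong: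
  assumes "4 dvd CARD('a) - 1" "even (degree f)"
  shows "[pderiv f ^ ((CARD('a) ^ degree f - 1) div 2) = -1] (mod f)"
proof -
  let ?q = "CARD('a)" and ?d = "degree f" and ?c = "[:lead_coeff f:]"
  define h where "h = (?q - 1) div 2"
  have "even h" "?q - 1 = 2 * h"
    using assms(1) by (auto simp: h_def)
  have exponent: "(?q ^ ?d - 1) div 2 = (\<Sum>k<?d. ?q ^ k) * h"
  proof -
    have "int (?q ^ ?d - 1) = int ((?q - 1) * (\<Sum>k<?d. ?q ^ k))"
      using power_diff_1_eq[of "int ?q" ?d] finite_UNIV_card_ge_0[where 'a='a] by simp
    then show ?thesis
      using \<open>?q - 1 = 2 * h\<close> by (simp only: of_nat_eq_iff) simp
  qed
  have pair: "((u - v) * (v - u)) ^ h = (u - v) ^ (?q - 1)" for u v :: "'a poly"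
  proof -
    have "(u - v) * (v - u) = - ((u - v) ^ 2)"
      by (simp add: power2_eq_square algebra_simps)
    then show ?thesis
      using \<open>even h\<close> \<open>?q - 1 = 2 * h\<close> by (simp add: power_mult)
  qed
  have lead: "(?c ^ ?d) ^ h = 1"
  proof -
    have "?d * h = (?q - 1) * (?d div 2)"
      using assms(2) \<open>?q - 1 = 2 * h\<close> by auto
    then have "(?c ^ ?d) ^ h = [:(lead_coeff f ^ (?q - 1)) ^ (?d div 2):]"
      by (simp add: poly_const_pow flip: power_mult)
    moreover have "lead_coeff f ^ (?q - 1) = 1"
      using irreducible_f by (intro power_card_minus_one_eq) auto
    ultimately show ?thesis
      by simp
  qed
  have "pderiv f ^ ((?q ^ ?d - 1) div 2) = (pderiv f ^ (\<Sum>k<?d. ?q ^ k)) ^ h"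
    by (simp only: exponent power_mult)
  also have "[\<dots> =
      (?c ^ ?d * (\<Prod>j<?d. \<Prod>i<j. (conj_mod i - conj_mod j) * (conj_mod j - conj_mod i))) ^ h] (mod f)"
    using norm_pderiv_cong by (rule cong_pow)
  also have "(?c ^ ?d * (\<Prod>j<?d. \<Prod>i<j. (conj_mod i - conj_mod j) * (conj_mod j - conj_mod i))) ^ h =
      vandermonde_prod conj_mod ?d ^ (?q - 1)"
    by (simp only: power_mult_distrib[of "?c ^ ?d"] lead mult_1 prod_power_distrib pair
        vandermonde_prod_def)
  also have "[\<dots> = -1] (mod f)"
    using assms(2) by (rule vandermonde_conj_power_cong)
  finally show ?thesis .
qed

end

theorem lemma5p1:
  fixes f :: "'a::{field,finite} poly"
  assumes "4 dvd (card (UNIV :: 'a set) - 1)"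
    and "irreducible f"
    and "even (degree f)"
  shows "quad_nonresidue_mod f (pderiv f)"
proof -
  interpret irreducible_poly f
    by unfold_locales (fact assms(2))
  have "odd CARD('a)"
    using assms(1) two_le_card[where 'a='a] by (auto elim!: dvdE) presburger
  moreover have "[pderiv f ^ ((CARD('a) ^ degree f - 1) div 2) = -1] (mod f)"
    using assms(1,3) by (rule pderiv_power_half_cong)
  ultimately have "\<not> (\<exists>y. [y ^ 2 = pderiv f] (mod f))"
    by (rule euler_nonresidue)
  then show ?thesis
    by (simp add: quad_nonresidue_mod_def cong_def)
qed

end
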